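(* Let $R_o$ be a weak consistent digital ray system with root $o=(0,0)$ in $\mathbb{Z}^2$ whose error is less than $1.5$. Suppose $v\in Q_1$ does not extend to diagonal $d$, for some integer $d>D(v)$. Then $v^\nwarrow=(v_x-1,v_y+1)$ extends to diagonal $d$ if $v^\nwarrow\in Q_1$, and $v^\searrow=(v_x+1,v_y-1)$ extends to diagonal $d$ if $v^\searrow\in Q_1$.
   Context: The grid graph on $\mathbb{Z}^2$ has edges between points at $L_1$ distance $1$. A weak consistent digital ray system (WCDR) with root $o$ assigns to each $p\in\mathbb{Z}^2$ a set $R_o(p)$ such that: (S1) $R_o(p)$ is the vertex set of a path from $o$ to $p$ in the grid graph; (S3) for every $q\in R_o(p)$, $R_o(q)\subseteq R_o(p)$; (S5) if $p_x=o_x$ (resp. $p_y=o_y$) then all points of $R_o(p)$ have $x$-coordinate $o_x$ (resp. $y$-coordinate $o_y$). Its error is $\sup_p \max_{v\in R_o(p)}\mathrm{dist}_\infty(v,\overline{op})$, with $\overline{op}$ the Euclidean segment and $\mathrm{dist}_\infty$ the $L_\infty$ distance. $Q_1=\{p\in\mathbb{Z}^2:p_x\ge0,p_y\ge0\}$, $D(p)=p_x+p_y$. A point $v$ extends to diagonal $d$ if there is $p\in Q_1$ with $D(p)=d$ and $v\in R_o(p)$. *)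

theory Defs
  imports "HOL-Analysis.Analysis"
begin

type_synonym pt = "int \<times> int"

definition grid_adj :: "pt \<Rightarrow> pt \<Rightarrow> bool" where
  "grid_adj a b \<longleftrightarrow> \<bar>fst a - fst b\<bar> + \<bar>snd a - snd b\<bar> = 1"

definition is_grid_path_set :: "pt \<Rightarrow> pt \<Rightarrow> pt set \<Rightarrow> bool" where
  "is_grid_path_set a b S \<longleftrightarrow>
     (\<exists>xs. xs \<noteq> [] \<and> hd xs = a \<and> last xs = b \<and> distinct xs \<and>
           (\<forall>i. Suc i < length xs \<longrightarrow> grid_adj (xs ! i) (xs ! Suc i)) \<and>
           set xs = S)"

definition wcdr :: "(pt \<Rightarrow> pt set) \<Rightarrow> pt \<Rightarrow> bool" where
  "wcdr R r \<longleftrightarrow>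
     (\<forall>p. is_grid_path_set r p (R p)) \<and>
     (\<forall>p. \<forall>q\<in>R p. R q \<subseteq> R p) \<and>
     (\<forall>p. fst p = fst r \<longrightarrow> (\<forall>v\<in>R p. fst v = fst r)) \<and>
     (\<forall>p. snd p = snd r \<longrightarrow> (\<forall>v\<in>R p. snd v = snd r))"

definition dist_inf_seg :: "pt \<Rightarrow> pt \<Rightarrow> pt \<Rightarrow> real" where
  "dist_inf_seg v r p =
     (INF t\<in>{0..1::real}.
        max \<bar>real_of_int (fst v) - ((1 - t) * real_of_int (fst r) + t * real_of_int (fst p))\<bar>
            \<bar>real_of_int (snd v) - ((1 - t) * real_of_int (snd r) + t * real_of_int (snd p))\<bar>)"

definition wcdr_error :: "(pt \<Rightarrow> pt set) \<Rightarrow> pt \<Rightarrow> ereal" where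
  "wcdr_error R r = (SUP p. SUP v\<in>R p. ereal (dist_inf_seg v r p))"

definition Q1 :: "pt set" where
  "Q1 = {p. fst p \<ge> 0 \<and> snd p \<ge> 0}"

definition D :: "pt \<Rightarrow> int" where
  "D p = fst p + snd p"

definition extends_to :: "(pt \<Rightarrow> pt set) \<Rightarrow> pt \<Rightarrow> int \<Rightarrow> bool" where
  "extends_to R v d \<longleftrightarrow> (\<exists>p\<in>Q1. D p = d \<and> v \<in> R p)"

end

theory Submission
  imports Defs
begin

(* Let u be a neighbour of v on its diagonal and aim a ray at p = d (v + u): its segment
   crosses diagonal D v exactly at the midpoint of v and u, and the factor d makes R(p)
   reach diagonal d.  An error below 3/2 forces R(p) to cross diagonal D v at v or at u,
   and to cross diagonal d inside Q1, at some q.  By consistency R(q) is contained in R(p),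
   and R(q) itself crosses diagonal D v, so v or u extends to d. *)

lemma grid_path_list_crosses_diagonal:
  fixes xs :: "pt list"
  assumes "xs \<noteq> []" "\<forall>i. Suc i < length xs \<longrightarrow> grid_adj (xs ! i) (xs ! Suc i)"
    and "D (hd xs) \<le> c" "c \<le> D (last xs)"
  shows "\<exists>x\<in>set xs. D x = c"
  using assms
proof (induction xs)
  case Nil
  then show ?case by simp
next
  case (Cons x ys)
  show ?case
  proof (cases "D x = c")
    case True
    then show ?thesis by simp
  next
    case False
    then have "D x < c" using Cons.prems(3) by simp
    then have "ys \<noteq> []" using Cons.prems(4) by auto
    have "grid_adj x (hd ys)"
      using Cons.prems(2)[rule_format, of 0] \<open>ys \<noteq> []\<close> by (simp add: hd_conv_nth)
    then have "D (hd ys) \<le> c" using \<open>D x < c\<close> unfolding grid_adj_def D_def by auto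
    moreover have "\<forall>i. Suc i < length ys \<longrightarrow> grid_adj (ys ! i) (ys ! Suc i)"
      using Cons.prems(2) by (metis Suc_less_eq length_Cons nth_Cons_Suc)
    moreover have "c \<le> D (last ys)" using Cons.prems(4) \<open>ys \<noteq> []\<close> by simp
    ultimately show ?thesis using Cons.IH \<open>ys \<noteq> []\<close> by auto
  qed
qed

lemma grid_path_crosses_diagonal:
  assumes "is_grid_path_set a b S" "D a \<le> c" "c \<le> D b"
  shows "\<exists>x\<in>S. D x = c"
  using assms grid_path_list_crosses_diagonal unfolding is_grid_path_set_def by metis

lemma wcdr_error_less_imp_near_ray:
  assumes "wcdr_error R (0, 0) < ereal e" "w \<in> R p"
  shows "\<exists>t. \<bar>real_of_int (fst w) - t * real_of_int (fst p)\<bar> < e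
           \<and> \<bar>real_of_int (snd w) - t * real_of_int (snd p)\<bar> < e"
proof -
  have "ereal (dist_inf_seg w (0, 0) p) \<le> wcdr_error R (0, 0)"
    unfolding wcdr_error_def using assms(2) by (meson SUP_upper UNIV_I order_trans)
  from order_le_less_trans[OF this assms(1)] have "dist_inf_seg w (0, 0) p < e" by simp
  then have "\<exists>t\<in>{0..1::real}. max \<bar>real_of_int (fst w) - t * real_of_int (fst p)\<bar>
                                   \<bar>real_of_int (snd w) - t * real_of_int (snd p)\<bar> < e"
    unfolding dist_inf_seg_def
    by (subst (asm) cINF_less_iff) (auto intro!: bdd_belowI[where m = 0])
  then show ?thesis by auto
qed

lemma wcdr_error_less_imp_near_direction:
  assumes "wcdr_error R (0, 0) < ereal e" "w \<in> R (d * X, d * Y)"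
  shows "\<exists>s. \<bar>real_of_int (fst w) - s * real_of_int X\<bar> < e
           \<and> \<bar>real_of_int (snd w) - s * real_of_int Y\<bar> < e"
proof -
  obtain t where "\<bar>real_of_int (fst w) - t * real_of_int (d * X)\<bar> < e"
      "\<bar>real_of_int (snd w) - t * real_of_int (d * Y)\<bar> < e"
    using wcdr_error_less_imp_near_ray[OF assms] by auto
  then show ?thesis by (intro exI[of _ "t * d"]) (simp add: mult.assoc)
qed

lemma near_ray_close_to_crossing:
  fixes x y X Y s :: real
  assumes "0 \<le> X" "0 \<le> Y" "X + Y = 2 * (x + y)"
    and "\<bar>x - s * X\<bar> < 3 / 2" "\<bar>y - s * Y\<bar> < 3 / 2"
  shows "\<bar>2 * x - X\<bar> < 3"
proof -
  have sum: "X + Y = 2 * x + 2 * y" using assms(3) by simp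
  show ?thesis
  proof (cases "s \<le> 1 / 2")
    case True
    then have "s * X \<le> X / 2" "s * Y \<le> Y / 2"
      using mult_right_mono[OF True] assms(1,2) by auto
    then show ?thesis using sum assms(4,5) by linarith
  next
    case False
    then have "X / 2 \<le> s * X" "Y / 2 \<le> s * Y"
      using mult_right_mono[of "1 / 2" s] assms(1,2) by auto
    then show ?thesis using sum assms(4,5) by linarith
  qed
qed

lemma near_ray_beyond_crossing:
  fixes x y X Y s :: real
  assumes "1 \<le> X" "1 \<le> Y" "X + Y \<le> 2 * (x + y)"
    and "\<bar>x - s * X\<bar> < 3 / 2" "\<bar>y - s * Y\<bar> < 3 / 2"
  shows "-1 < x"
proof (rule ccontr)
  assume "\<not> -1 < x"
  have sum: "X + Y \<le> 2 * x + 2 * y" using assms(3) by simp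
  have "s < 1 / 2"
  proof (rule ccontr)
    assume "\<not> s < 1 / 2"
    then have "X / 2 \<le> s * X" using mult_right_mono[of "1 / 2" s X] assms(1) by auto
    then show False using \<open>\<not> -1 < x\<close> assms(1,4) by linarith
  qed
  then have "s * Y \<le> Y / 2" using mult_right_mono[of s "1 / 2" Y] assms(2) by auto
  then show False using \<open>\<not> -1 < x\<close> sum assms(1,5) by linarith
qed

lemma near_ray_point_on_crossing_diagonal:
  fixes w :: pt and X Y :: int and s :: real
  assumes "\<bar>real_of_int (fst w) - s * real_of_int X\<bar> < 3 / 2"
    and "\<bar>real_of_int (snd w) - s * real_of_int Y\<bar> < 3 / 2"
    and "0 \<le> X" "0 \<le> Y" "X + Y = 2 * D w"
  shows "\<bar>2 * fst w - X\<bar> < 3"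
proof -
  have "real_of_int X + real_of_int Y = 2 * (real_of_int (fst w) + real_of_int (snd w))"
    using assms(5) unfolding D_def by (metis of_int_add of_int_mult of_int_numeral)
  from near_ray_close_to_crossing[OF _ _ this assms(1,2)] assms(3,4)
  have "\<bar>2 * real_of_int (fst w) - real_of_int X\<bar> < 3" by simp
  then show ?thesis by (metis of_int_abs of_int_diff of_int_mult of_int_numeral of_int_less_iff)
qed

lemma near_ray_point_beyond_crossing_in_Q1:
  fixes w :: pt and X Y :: int and s :: real
  assumes "\<bar>real_of_int (fst w) - s * real_of_int X\<bar> < 3 / 2"
    and "\<bar>real_of_int (snd w) - s * real_of_int Y\<bar> < 3 / 2"
    and "1 \<le> X" "1 \<le> Y" "X + Y \<le> 2 * D w"
  shows "w \<in> Q1"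
proof -
  have sum: "real_of_int X + real_of_int Y \<le> 2 * (real_of_int (fst w) + real_of_int (snd w))"
    using assms(5) unfolding D_def by (metis of_int_add of_int_mult of_int_numeral of_int_le_iff)
  have "-1 < real_of_int (fst w)"
    using near_ray_beyond_crossing[OF _ _ sum assms(1,2)] assms(3,4) by simp
  moreover have "-1 < real_of_int (snd w)"
    using near_ray_beyond_crossing[of "real_of_int Y" "real_of_int X"] sum assms by (simp add: add.commute)
  ultimately show ?thesis by (simp add: Q1_def)
qed

lemma wcdr_extends_to_one_of:
  assumes "wcdr R (0, 0)" "0 \<le> k" "k \<le> d" "d \<le> D p"
    and crossing_k: "\<And>w. w \<in> R p \<Longrightarrow> D w = k \<Longrightarrow> w \<in> V"
    and crossing_d: "\<And>w. w \<in> R p \<Longrightarrow> D w = d \<Longrightarrow> w \<in> Q1"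
  shows "\<exists>v\<in>V. extends_to R v d"
proof -
  have path: "\<And>p. is_grid_path_set (0, 0) p (R p)"
    and consistent: "\<And>p q. q \<in> R p \<Longrightarrow> R q \<subseteq> R p"
    using assms(1) unfolding wcdr_def by blast+
  have "D (0, 0) = 0" by (simp add: D_def)
  then obtain q where q: "q \<in> R p" "D q = d"
    using grid_path_crosses_diagonal[OF path, of d p] assms(2-4) by auto
  obtain w where w: "w \<in> R q" "D w = k"
    using grid_path_crosses_diagonal[OF path, of k q] \<open>D (0, 0) = 0\<close> assms(2,3) q(2) by auto
  have "w \<in> V" using crossing_k consistent[OF q(1)] w by blast
  moreover have "extends_to R w d"
    unfolding extends_to_def using crossing_d q w by blast
  ultimately show ?thesis by blast
qed

lemma wcdr_extends_to_diagonal_neighbour: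
  assumes W: "wcdr R (0, 0)" and err: "wcdr_error R (0, 0) < ereal (3 / 2)"
    and "v \<in> Q1" "u \<in> Q1" "D u = D v" "\<bar>fst u - fst v\<bar> = 1" "D v < d"
  shows "extends_to R v d \<or> extends_to R u d"
proof -
  obtain a b a' b' where v: "v = (a, b)" and u: "u = (a', b')" by fastforce
  have coords: "0 \<le> a" "0 \<le> b" "0 \<le> a'" "0 \<le> b'" "a' + b' = a + b" "\<bar>a' - a\<bar> = 1" "a + b < d"
    using assms(3-7) by (auto simp: v u Q1_def D_def)
  define p where "p = (d * (a + a'), d * (b + b'))"
  have "D p = d * ((a + a') + (b + b'))" by (simp add: p_def D_def distrib_left)
  also have "\<dots> = d * (2 * (a + b))" using coords(5) by (intro arg_cong[where f = "(*) d"]) presburger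
  also have "d * 1 \<le> \<dots>" by (rule mult_left_mono) (use coords in auto)
  finally have "d \<le> D p" by simp
  have "\<exists>z\<in>{v, u}. extends_to R z d"
  proof (rule wcdr_extends_to_one_of[OF W _ _ \<open>d \<le> D p\<close>, of "a + b"])
    fix w assume "w \<in> R p" "D w = a + b"
    then obtain s where "\<bar>real_of_int (fst w) - s * real_of_int (a + a')\<bar> < 3 / 2"
        "\<bar>real_of_int (snd w) - s * real_of_int (b + b')\<bar> < 3 / 2"
      using wcdr_error_less_imp_near_direction[OF err] unfolding p_def by blast
    then have "\<bar>2 * fst w - (a + a')\<bar> < 3"
      by (rule near_ray_point_on_crossing_diagonal) (use coords \<open>D w = a + b\<close> in auto)
    then have "fst w = a \<or> fst w = a'" using coords(6) by presburger
    then show "w \<in> {v, u}" using \<open>D w = a + b\<close> coords(5) by (cases w) (auto simp: v u D_def)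
  next
    fix w assume "w \<in> R p" "D w = d"
    then obtain s where "\<bar>real_of_int (fst w) - s * real_of_int (a + a')\<bar> < 3 / 2"
        "\<bar>real_of_int (snd w) - s * real_of_int (b + b')\<bar> < 3 / 2"
      using wcdr_error_less_imp_near_direction[OF err] unfolding p_def by blast
    then show "w \<in> Q1"
      by (rule near_ray_point_beyond_crossing_in_Q1) (use coords \<open>D w = d\<close> in auto)
  qed (use coords in auto)
  then show ?thesis by blast
qed

theorem lemma6:
  fixes R :: "pt \<Rightarrow> pt set" and v :: pt and d :: int
  assumes "wcdr R (0, 0)"
    and "wcdr_error R (0, 0) < ereal (3 / 2)"
    and "v \<in> Q1"
    and "d > D v"
    and "\<not> extends_to R v d"
  shows "((fst v - 1, snd v + 1) \<in> Q1 \<longrightarrow> extends_to R (fst v - 1, snd v + 1) d) \<and>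
         ((fst v + 1, snd v - 1) \<in> Q1 \<longrightarrow> extends_to R (fst v + 1, snd v - 1) d)"
  using wcdr_extends_to_diagonal_neighbour[OF assms(1-3) _ _ _ assms(4)] assms(5)
  by (auto simp: D_def)

end
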